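(* Let $\omega=\{\omega_k\}_{k\in\mathbb{N}}$ be a sequence of positive real numbers with $\omega_0=1$, such that there is a constant $C>1$ with $\omega_k\le Ck^2$ and $\omega_k\le\omega_{k+1}$ for all $k\in\mathbb{N}$. Let $H^2_\omega$ be the space of holomorphic functions $f(z)=\sum_{k\ge0}\hat f(k)z^k$ on the unit disc $\mathbb{D}$ with finite norm $\|f\|_\omega=\left(\sum_{k\ge0}|\hat f(k)|^2\omega_k\right)^{1/2}$. Let $f\in H^2_\omega$. Consider the conditions: (a) $\|f\|_\omega=1$ and for every integer $k\ge1$ and every $\lambda\in\mathbb{C}$, $$\|f\,g_{k,\lambda}\|_\omega^2\le \omega_k+|\lambda|^2,\qquad\text{where } g_{k,\lambda}(z)=z^k+\lambda;$$ (b) $\|f\|_\omega=\|f\|_{M}=1$, where $\|f\|_M$ denotes the multiplier norm of $f$ on $H^2_\omega$. Then (b) implies (a), and (a) implies that $f$ is $H^2_\omega$-inner, i.e. $\langle z^j f,f\rangle_\omega=\delta_{0,j}$ for all $j\in\mathbb{N}$.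
   Context: $\mathbb{N}=\{0,1,2,\dots\}$. The inner product on $H^2_\omega$ is $\langle f,g\rangle_\omega=\sum_{k\ge0}\hat f(k)\overline{\hat g(k)}\,\omega_k$, and $\delta_{0,j}$ is the Kronecker delta. A holomorphic function $h$ on $\mathbb{D}$ is a multiplier of $H^2_\omega$ if $g\mapsto hg$ is a bounded operator on $H^2_\omega$; its multiplier norm $\|h\|_M$ is the operator norm of this multiplication operator (condition (b) in particular requires $f$ to be a multiplier). Such spaces $H^2_\omega$ coincide with Dirichlet-type spaces $D_\mu$ with radial measure $\mu$, whose norm is $\|f\|_{H^2}^2+\int_{\mathbb{D}}|f'|^2\,d\mu$. *)

theory Defs
  imports "HOL-Analysis.Analysis"
begin

definition tcoeff :: "(complex \<Rightarrow> complex) \<Rightarrow> nat \<Rightarrow> complex" where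
  "tcoeff f k = (deriv ^^ k) f 0 / of_nat (fact k)"

definition in_H2w :: "(nat \<Rightarrow> real) \<Rightarrow> (complex \<Rightarrow> complex) \<Rightarrow> bool" where
  "in_H2w \<omega> f \<longleftrightarrow> f holomorphic_on ball 0 1 \<and>
     summable (\<lambda>k. (cmod (tcoeff f k))^2 * \<omega> k)"

definition normw :: "(nat \<Rightarrow> real) \<Rightarrow> (complex \<Rightarrow> complex) \<Rightarrow> real" where
  "normw \<omega> f = sqrt (\<Sum>k. (cmod (tcoeff f k))^2 * \<omega> k)"

definition innerw :: "(nat \<Rightarrow> real) \<Rightarrow> (complex \<Rightarrow> complex) \<Rightarrow> (complex \<Rightarrow> complex) \<Rightarrow> complex" where
  "innerw \<omega> f g = (\<Sum>k. tcoeff f k * cnj (tcoeff g k) * complex_of_real (\<omega> k))"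

definition is_multiplier :: "(nat \<Rightarrow> real) \<Rightarrow> (complex \<Rightarrow> complex) \<Rightarrow> bool" where
  "is_multiplier \<omega> h \<longleftrightarrow> h holomorphic_on ball 0 1 \<and>
     (\<exists>B. \<forall>g. in_H2w \<omega> g \<longrightarrow> in_H2w \<omega> (\<lambda>z. h z * g z) \<and>
                 normw \<omega> (\<lambda>z. h z * g z) \<le> B * normw \<omega> g)"

definition mult_norm :: "(nat \<Rightarrow> real) \<Rightarrow> (complex \<Rightarrow> complex) \<Rightarrow> real" where
  "mult_norm \<omega> h = (SUP g \<in> {g. in_H2w \<omega> g \<and> normw \<omega> g \<le> 1}. normw \<omega> (\<lambda>z. h z * g z))"

end

theory Submission
  imports Defs "HOL-Complex_Analysis.Complex_Analysis"
begin

text \<open>(b) \<open>\<Longrightarrow>\<close> (a): a multiplier of norm 1 does not increase the norm of \<open>z\<^sup>k + \<lambda>\<close>, whose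
  squared norm is \<open>\<omega>\<^sub>k + |\<lambda>|\<^sup>2\<close> because \<open>\<omega>\<^sub>0 = 1\<close>.
  (a) \<open>\<Longrightarrow>\<close> inner: expanding \<open>\<parallel>z\<^sup>j f + \<lambda> f\<parallel>\<^sup>2\<close> with \<open>\<parallel>f\<parallel> = 1\<close>, condition (a) says
  \<open>2 Re (\<lambda>\<^sup>* \<langle>z\<^sup>j f, f\<rangle>) \<le> \<omega>\<^sub>j - \<parallel>z\<^sup>j f\<parallel>\<^sup>2\<close> for every \<open>\<lambda>\<close>; a real-linear functional
  bounded above on all of \<open>\<complex>\<close> vanishes, so \<open>\<langle>z\<^sup>j f, f\<rangle> = 0\<close> for \<open>j \<ge> 1\<close>.\<close>

lemma tcoeff_add:
  assumes "f holomorphic_on ball 0 1" "g holomorphic_on ball 0 1"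
  shows "tcoeff (\<lambda>z. f z + g z) n = tcoeff f n + tcoeff g n"
  unfolding tcoeff_def
  using higher_deriv_add[OF assms open_ball, of 0 n] by (simp add: add_divide_distrib)

lemma tcoeff_cmult:
  assumes "f holomorphic_on ball 0 1"
  shows "tcoeff (\<lambda>z. c * f z) n = c * tcoeff f n"
  unfolding tcoeff_def
  using higher_deriv_cmult[OF assms _ open_ball, of 0 n c] by simp

lemma tcoeff_power: "tcoeff (\<lambda>z. z ^ k) n = (if n = k then 1 else 0)"
proof -
  have "(deriv ^^ n) (\<lambda>w. w ^ k) 0 = pochhammer (of_nat (Suc k - n)) n * (0::complex) ^ (k - n)"
    using higher_deriv_power[of n 0 k 0] by simp
  also have "\<dots> = (if n = k then fact k else 0)"
  proof (cases n k rule: linorder_cases)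
    case greater
    then have "Suc k - n = 0" by simp
    with greater show ?thesis by (simp add: pochhammer_0_left)
  qed (simp_all add: pochhammer_fact)
  finally show ?thesis unfolding tcoeff_def by simp
qed

lemma tcoeff_const: "tcoeff (\<lambda>z. c) n = (if n = 0 then c else 0)"
  unfolding tcoeff_def by simp

lemma normw_nonneg:
  assumes "in_H2w \<omega> h" "\<And>n. \<omega> n \<ge> 0"
  shows "normw \<omega> h \<ge> 0"
  using assms unfolding in_H2w_def normw_def
  by (intro real_sqrt_ge_zero suminf_nonneg) auto

lemma power2_normw:
  assumes "in_H2w \<omega> h" "\<And>n. \<omega> n \<ge> 0"
  shows "(normw \<omega> h)\<^sup>2 = (\<Sum>k. (cmod (tcoeff h k))\<^sup>2 * \<omega> k)"
  using assms unfolding in_H2w_def normw_def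
  by (intro real_sqrt_pow2 suminf_nonneg) auto

lemma in_H2w_cmult:
  assumes "in_H2w \<omega> h"
  shows "in_H2w \<omega> (\<lambda>z. a * h z)"
proof -
  have hol: "h holomorphic_on ball 0 1" using assms unfolding in_H2w_def by auto
  have "summable (\<lambda>k. (cmod a)\<^sup>2 * ((cmod (tcoeff h k))\<^sup>2 * \<omega> k))"
    using assms unfolding in_H2w_def by (intro summable_mult) auto
  then show ?thesis using hol unfolding in_H2w_def
    by (simp add: tcoeff_cmult[OF hol] norm_mult power_mult_distrib mult.assoc holomorphic_on_mult)
qed

lemma normw_cmult:
  assumes "in_H2w \<omega> h"
  shows "normw \<omega> (\<lambda>z. a * h z) = cmod a * normw \<omega> h"
proof -
  have hol: "h holomorphic_on ball 0 1" using assms unfolding in_H2w_def by auto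
  have sm: "summable (\<lambda>k. (cmod (tcoeff h k))\<^sup>2 * \<omega> k)" using assms unfolding in_H2w_def by auto
  have "normw \<omega> (\<lambda>z. a * h z) = sqrt (\<Sum>k. (cmod a)\<^sup>2 * ((cmod (tcoeff h k))\<^sup>2 * \<omega> k))"
    unfolding normw_def by (simp add: tcoeff_cmult[OF hol] norm_mult power_mult_distrib mult.assoc)
  also have "\<dots> = sqrt ((cmod a)\<^sup>2 * (\<Sum>k. (cmod (tcoeff h k))\<^sup>2 * \<omega> k))"
    by (simp add: suminf_mult[OF sm])
  also have "\<dots> = cmod a * normw \<omega> h"
    unfolding normw_def by (simp add: real_sqrt_mult)
  finally show ?thesis .
qed

lemma innerw_self:
  assumes "in_H2w \<omega> h"
  shows "innerw \<omega> h h = complex_of_real (\<Sum>k. (cmod (tcoeff h k))\<^sup>2 * \<omega> k)"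
proof -
  have "innerw \<omega> h h = (\<Sum>k. complex_of_real ((cmod (tcoeff h k))\<^sup>2 * \<omega> k))"
    unfolding innerw_def by (simp add: complex_norm_square[symmetric] mult.commute)
  also have "\<dots> = complex_of_real (\<Sum>k. (cmod (tcoeff h k))\<^sup>2 * \<omega> k)"
    using assms unfolding in_H2w_def by (intro suminf_of_real[symmetric]) auto
  finally show ?thesis .
qed

lemma sums_weighted_coeffs_monomial_plus_const:
  assumes "k \<ge> 1" "\<omega> 0 = 1"
  shows "(\<lambda>n. (cmod (tcoeff (\<lambda>z. z ^ k + c) n))\<^sup>2 * \<omega> n) sums (\<omega> k + (cmod c)\<^sup>2)"
proof -
  have coeff: "tcoeff (\<lambda>z. z ^ k + c) n = (if n = k then 1 else 0) + (if n = 0 then c else 0)" for n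
    by (subst tcoeff_add) (auto simp: tcoeff_power tcoeff_const intro!: holomorphic_intros)
  have "(\<lambda>n. (cmod (tcoeff (\<lambda>z. z ^ k + c) n))\<^sup>2 * \<omega> n) sums
          (\<Sum>n\<in>{0, k}. (cmod (tcoeff (\<lambda>z. z ^ k + c) n))\<^sup>2 * \<omega> n)"
    by (rule sums_finite) (auto simp: coeff)
  also have "(\<Sum>n\<in>{0, k}. (cmod (tcoeff (\<lambda>z. z ^ k + c) n))\<^sup>2 * \<omega> n) = \<omega> k + (cmod c)\<^sup>2"
    using assms by (simp add: coeff)
  finally show ?thesis .
qed

lemma in_H2w_monomial_plus_const:
  assumes "k \<ge> 1" "\<omega> 0 = 1"
  shows "in_H2w \<omega> (\<lambda>z. z ^ k + c)"
  using sums_summable[OF sums_weighted_coeffs_monomial_plus_const[where \<omega> = \<omega>, OF assms]]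
  unfolding in_H2w_def by (auto intro!: holomorphic_intros)

lemma power2_normw_monomial_plus_const:
  assumes "k \<ge> 1" "\<omega> 0 = 1" "\<And>n. \<omega> n \<ge> 0"
  shows "(normw \<omega> (\<lambda>z. z ^ k + c))\<^sup>2 = \<omega> k + (cmod c)\<^sup>2"
  using power2_normw[OF in_H2w_monomial_plus_const[where \<omega> = \<omega>, OF assms(1,2)] assms(3)]
    sums_unique[OF sums_weighted_coeffs_monomial_plus_const[where \<omega> = \<omega>, OF assms(1,2)]]
  by simp

lemma normw_mult_le_if_mult_norm_le_1:
  assumes M: "is_multiplier \<omega> f" and MN: "mult_norm \<omega> f \<le> 1" and g: "in_H2w \<omega> g"
    and w: "\<And>n. \<omega> n \<ge> 0"
  shows "in_H2w \<omega> (\<lambda>z. f z * g z) \<and> normw \<omega> (\<lambda>z. f z * g z) \<le> normw \<omega> g"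
proof -
  obtain B where B: "\<And>g. in_H2w \<omega> g \<Longrightarrow> in_H2w \<omega> (\<lambda>z. f z * g z) \<and>
                 normw \<omega> (\<lambda>z. f z * g z) \<le> B * normw \<omega> g"
    using M unfolding is_multiplier_def by blast
  have bdd: "bdd_above ((\<lambda>g. normw \<omega> (\<lambda>z. f z * g z)) ` {g. in_H2w \<omega> g \<and> normw \<omega> g \<le> 1})"
  proof (rule bdd_aboveI2)
    fix h assume h: "h \<in> {g. in_H2w \<omega> g \<and> normw \<omega> g \<le> 1}"
    then have "normw \<omega> (\<lambda>z. f z * h z) \<le> B * normw \<omega> h" using B by blast
    also have "\<dots> \<le> \<bar>B\<bar> * 1"
      using normw_nonneg[of \<omega> h] h w by (intro mult_mono) auto
    finally show "normw \<omega> (\<lambda>z. f z * h z) \<le> \<bar>B\<bar>" by simp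
  qed
  have "normw \<omega> (\<lambda>z. f z * g z) \<le> normw \<omega> g"
  proof (cases "normw \<omega> g = 0")
    case True
    then show ?thesis using B[OF g] by simp
  next
    case False
    define s where "s = normw \<omega> g"
    have s: "s > 0" using False normw_nonneg[OF g w] s_def by simp
    define h where "h = (\<lambda>z. complex_of_real (1/s) * g z)"
    have h: "in_H2w \<omega> h" unfolding h_def by (rule in_H2w_cmult[OF g])
    have "normw \<omega> h = 1" unfolding h_def normw_cmult[OF g] using s s_def by (simp add: norm_divide)
    then have "normw \<omega> (\<lambda>z. f z * h z) \<le> mult_norm \<omega> f"
      unfolding mult_norm_def using h by (intro cSUP_upper[OF _ bdd]) auto
    then have fh: "normw \<omega> (\<lambda>z. f z * h z) \<le> 1" using MN by simp
    have "(\<lambda>z. f z * g z) = (\<lambda>z. complex_of_real s * (f z * h z))"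
      using s by (auto simp: h_def fun_eq_iff)
    then have "normw \<omega> (\<lambda>z. f z * g z) = s * normw \<omega> (\<lambda>z. f z * h z)"
      using normw_cmult[of \<omega> "\<lambda>z. f z * h z"] B[OF h] s by simp
    also have "\<dots> \<le> s" using fh s by (simp add: mult_left_le)
    finally show ?thesis using s_def by simp
  qed
  with B[OF g] show ?thesis by blast
qed

lemma sums_weighted_norm_add_cmult:
  fixes a b :: "nat \<Rightarrow> complex"
  assumes w: "\<And>n. \<omega> n \<ge> 0"
    and sa: "summable (\<lambda>n. (cmod (a n))\<^sup>2 * \<omega> n)"
    and sb: "summable (\<lambda>n. (cmod (b n))\<^sup>2 * \<omega> n)"
  shows "(\<lambda>n. (cmod (a n + c * b n))\<^sup>2 * \<omega> n) sums
     ((\<Sum>n. (cmod (a n))\<^sup>2 * \<omega> n) + (cmod c)\<^sup>2 * (\<Sum>n. (cmod (b n))\<^sup>2 * \<omega> n)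
       + 2 * Re (cnj c * (\<Sum>n. a n * cnj (b n) * complex_of_real (\<omega> n))))"
proof -
  define X where "X n = a n * cnj (b n) * complex_of_real (\<omega> n)" for n
  have "norm (X n) \<le> ((cmod (a n))\<^sup>2 * \<omega> n + (cmod (b n))\<^sup>2 * \<omega> n) / 2" for n
  proof -
    have "cmod (a n) * cmod (b n) \<le> ((cmod (a n))\<^sup>2 + (cmod (b n))\<^sup>2) / 2"
      using sum_squares_bound[of "cmod (a n)" "cmod (b n)"] by (simp add: power2_eq_square)
    then have "cmod (a n) * cmod (b n) * \<omega> n \<le> ((cmod (a n))\<^sup>2 + (cmod (b n))\<^sup>2) / 2 * \<omega> n"
      using w[of n] by (rule mult_right_mono)
    then show ?thesis using w[of n] by (simp add: X_def norm_mult field_simps)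
  qed
  then have "summable X"
    by (intro summable_comparison_test[OF _ summable_divide[OF summable_add[OF sa sb], of 2]]) auto
  then have "(\<lambda>n. 2 * Re (cnj c * X n)) sums (2 * Re (cnj c * suminf X))"
    by (intro sums_mult sums_Re summable_sums)
  moreover have "(\<lambda>n. (cmod c)\<^sup>2 * ((cmod (b n))\<^sup>2 * \<omega> n)) sums ((cmod c)\<^sup>2 * (\<Sum>n. (cmod (b n))\<^sup>2 * \<omega> n))"
    using sb by (intro sums_mult summable_sums)
  moreover have "(cmod (a n + c * b n))\<^sup>2 * \<omega> n =
      (cmod (a n))\<^sup>2 * \<omega> n + (cmod c)\<^sup>2 * ((cmod (b n))\<^sup>2 * \<omega> n) + 2 * Re (cnj c * X n)" for n
    unfolding cmod_power2 by (simp add: X_def power2_eq_square algebra_simps)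
  ultimately show ?thesis
    using summable_sums[OF sa] unfolding X_def by (simp add: sums_add)
qed

lemma power2_normw_add_cmult:
  assumes h: "in_H2w \<omega> h" and g: "in_H2w \<omega> g" and w: "\<And>n. \<omega> n \<ge> 0"
  shows "(normw \<omega> (\<lambda>z. h z + c * g z))\<^sup>2 =
           (normw \<omega> h)\<^sup>2 + (cmod c)\<^sup>2 * (normw \<omega> g)\<^sup>2 + 2 * Re (cnj c * innerw \<omega> h g)"
proof -
  have hol: "h holomorphic_on ball 0 1" "g holomorphic_on ball 0 1"
    using h g unfolding in_H2w_def by auto
  have coeff: "tcoeff (\<lambda>z. h z + c * g z) n = tcoeff h n + c * tcoeff g n" for n
    by (subst tcoeff_add) (auto simp: tcoeff_cmult hol intro!: holomorphic_intros)
  have S: "(\<lambda>n. (cmod (tcoeff h n + c * tcoeff g n))\<^sup>2 * \<omega> n) sums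
      ((normw \<omega> h)\<^sup>2 + (cmod c)\<^sup>2 * (normw \<omega> g)\<^sup>2 + 2 * Re (cnj c * innerw \<omega> h g))"
    using h g unfolding power2_normw[OF h w] power2_normw[OF g w] innerw_def in_H2w_def
    by (intro sums_weighted_norm_add_cmult w) auto
  have "in_H2w \<omega> (\<lambda>z. h z + c * g z)"
    using hol sums_summable[OF S] unfolding in_H2w_def coeff by (auto intro!: holomorphic_intros)
  with sums_unique[OF S] show ?thesis
    by (simp only: power2_normw[OF _ w] coeff)
qed

lemma eq_0_if_Re_cnj_mult_bounded:
  fixes z :: complex
  assumes "\<And>c. Re (cnj c * z) \<le> B"
  shows "z = 0"
proof (rule ccontr)
  assume z: "z \<noteq> 0"
  define t where "t = (\<bar>B\<bar> + 1) / (cmod z)\<^sup>2"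
  have "cnj (complex_of_real t * z) * z = complex_of_real t * (z * cnj z)"
    by simp
  also have "\<dots> = complex_of_real (t * (cmod z)\<^sup>2)"
    by (simp only: of_real_mult complex_norm_square)
  finally have "Re (cnj (complex_of_real t * z) * z) = \<bar>B\<bar> + 1"
    using z by (simp add: t_def)
  with assms[of "complex_of_real t * z"] show False by linarith
qed

lemma bounded_monomial_products_if_contractive_multiplier:
  assumes "is_multiplier \<omega> f" "mult_norm \<omega> f = 1"
    and "\<omega> 0 = 1" "\<And>n. \<omega> n \<ge> 0" "k \<ge> 1"
  shows "in_H2w \<omega> (\<lambda>z. f z * (z ^ k + c)) \<and>
         (normw \<omega> (\<lambda>z. f z * (z ^ k + c)))\<^sup>2 \<le> \<omega> k + (cmod c)\<^sup>2"
proof -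
  have "in_H2w \<omega> (\<lambda>z. f z * (z ^ k + c)) \<and>
        normw \<omega> (\<lambda>z. f z * (z ^ k + c)) \<le> normw \<omega> (\<lambda>z. z ^ k + c)"
    using assms by (intro normw_mult_le_if_mult_norm_le_1 in_H2w_monomial_plus_const) auto
  moreover from this have "(normw \<omega> (\<lambda>z. f z * (z ^ k + c)))\<^sup>2 \<le> (normw \<omega> (\<lambda>z. z ^ k + c))\<^sup>2"
    using normw_nonneg[OF _ assms(4)] by (intro power_mono) auto
  ultimately show ?thesis
    using power2_normw_monomial_plus_const[where \<omega> = \<omega>, OF assms(5,3,4)] by simp
qed

lemma innerw_shift_eq_0_if_bounded_monomial_products:
  assumes f: "in_H2w \<omega> f" and w: "\<And>n. \<omega> n \<ge> 0" and N: "normw \<omega> f = 1"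
    and H: "\<And>c. in_H2w \<omega> (\<lambda>z. f z * (z ^ j + c)) \<and>
                (normw \<omega> (\<lambda>z. f z * (z ^ j + c)))\<^sup>2 \<le> \<omega> j + (cmod c)\<^sup>2"
  shows "innerw \<omega> (\<lambda>z. z ^ j * f z) f = 0"
proof (rule eq_0_if_Re_cnj_mult_bounded)
  have shift: "(\<lambda>z. f z * (z ^ j + c)) = (\<lambda>z. z ^ j * f z + c * f z)" for c
    by (simp add: fun_eq_iff algebra_simps)
  have zf: "in_H2w \<omega> (\<lambda>z. z ^ j * f z)"
    using H[of 0] by (simp add: mult.commute)
  fix c
  have "(normw \<omega> (\<lambda>z. z ^ j * f z))\<^sup>2 + (cmod c)\<^sup>2 + 2 * Re (cnj c * innerw \<omega> (\<lambda>z. z ^ j * f z) f)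
          \<le> \<omega> j + (cmod c)\<^sup>2"
    using H[of c] power2_normw_add_cmult[OF zf f w, of c] N by (simp add: shift)
  then show "Re (cnj c * innerw \<omega> (\<lambda>z. z ^ j * f z) f) \<le> \<omega> j / 2"
    using zero_le_power2[of "normw \<omega> (\<lambda>z. z ^ j * f z)"] by linarith
qed

theorem theorem2p1:
  fixes \<omega> :: "nat \<Rightarrow> real" and C :: real and f :: "complex \<Rightarrow> complex"
  assumes pos: "\<And>k. \<omega> k > 0"
    and w0: "\<omega> 0 = 1"
    and C: "C > 1"
    and growth: "\<And>k. k \<ge> 1 \<Longrightarrow> \<omega> k \<le> C * (real k)^2"
    and mono: "\<And>k. \<omega> k \<le> \<omega> (Suc k)"
    and f: "in_H2w \<omega> f"
  shows "((is_multiplier \<omega> f \<and> normw \<omega> f = 1 \<and> mult_norm \<omega> f = 1) \<longrightarrow>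
           (normw \<omega> f = 1 \<and>
            (\<forall>k::nat. k \<ge> 1 \<longrightarrow> (\<forall>c::complex.
               in_H2w \<omega> (\<lambda>z. f z * (z ^ k + c)) \<and>
               (normw \<omega> (\<lambda>z. f z * (z ^ k + c)))^2 \<le> \<omega> k + (cmod c)^2))))
       \<and> ((normw \<omega> f = 1 \<and>
            (\<forall>k::nat. k \<ge> 1 \<longrightarrow> (\<forall>c::complex.
               in_H2w \<omega> (\<lambda>z. f z * (z ^ k + c)) \<and>
               (normw \<omega> (\<lambda>z. f z * (z ^ k + c)))^2 \<le> \<omega> k + (cmod c)^2)))
          \<longrightarrow> (\<forall>j::nat. innerw \<omega> (\<lambda>z. z ^ j * f z) f = (if j = 0 then 1 else 0)))"
proof -
  have w: "\<And>n. \<omega> n \<ge> 0" using pos less_imp_le by blast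
  have "innerw \<omega> (\<lambda>z. z ^ j * f z) f = (if j = 0 then 1 else 0)"
    if N: "normw \<omega> f = 1" and H: "\<forall>k::nat. k \<ge> 1 \<longrightarrow> (\<forall>c::complex.
               in_H2w \<omega> (\<lambda>z. f z * (z ^ k + c)) \<and>
               (normw \<omega> (\<lambda>z. f z * (z ^ k + c)))^2 \<le> \<omega> k + (cmod c)^2)" for j
  proof (cases "j = 0")
    case True
    then show ?thesis using innerw_self[OF f] power2_normw[OF f w] N by simp
  next
    case False
    then show ?thesis
      using innerw_shift_eq_0_if_bounded_monomial_products[OF f w N] H by simp
  qed
  then show ?thesis
    using bounded_monomial_products_if_contractive_multiplier[where \<omega> = \<omega>, OF _ _ w0 w]
    by blast
qed

end
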